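(* The renormalisation decoder on $\mathbf{T}_k$ can be run with $O(n\log_2 n)$ operations, where $n=2\cdot4^k$ is the length of the toric code, and, executing the instructions of each step of each reduction procedure simultaneously over all blocks, it can be parallelised to run in time $O(\log_2 n)$.
   Context: Fix $k\ge1$. Let $\mathbf{T}_k=(V_k,E_k)$ be the Cayley graph of $\mathbb{Z}/2^k\mathbb{Z}\times\mathbb{Z}/2^k\mathbb{Z}$ with generators $(\pm1,0),(0,\pm1)$, $n=|E_k|$. For $\hat{\mathbf{e}}\in\mathbb{F}_2^{E_k}$, $\sigma(\hat{\mathbf{e}})$ is the set of vertices incident to an odd number of its edges. For $0\le i\le k$ let $h_i=2^{k-i}$, $V_i$ the subgroup generated by $(h_i,0),(0,h_i)$, and $\mathbf{T}_i$ the graph on $V_i$ joining vertices differing by $\pm h_i$ in one coordinate; an edge of $\mathbf{T}_i$ is identified with the straight path of length $h_i$ in $\mathbf{T}_k$, and flipping it means adding that path mod 2. For $i\ge1$, a cell of $\mathbf{T}_i$ is a face with vertices $\alpha=(x,y),\beta=(x+h_i,y),\gamma=(x,y-h_i),\delta=(x+h_i,y-h_i)$ and edges $t=\alpha\beta,b=\gamma\delta,l=\alpha\gamma,r=\beta\delta$; a block is a square of side $2h_i$ with top-left corner in $V_{i-1}$, made of cells $A$ (top-left), $B$ (top-right), $C$ (bottom-left), $D$ (bottom-right). Reduction procedure on $\mathbf{T}_i$ (input $S\subseteq V_i$, output $\hat{\mathbf{e}}_i$; tests in each step use $S$ as at the start of the step). Step 1: in each $D$ cell, if $\alpha,\delta\in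 S$ flip $l,b$; if $\beta,\gamma\in S$ flip $b,r$; remove paired vertices from $S$. Step 2: in each $C$ cell, if $\alpha,\gamma\in S$ flip $l$, if $\beta,\delta\in S$ flip $r$; in each $B$ cell, if $\alpha,\beta\in S$ flip $t$, if $\gamma,\delta\in S$ flip $b$; remove paired vertices. Step 3: in each $A$ cell, if $\beta\in S$ flip $t$, if $\gamma\in S$ flip $l$, if $\delta\in S$ flip $l,b$. Renormalisation decoder: input $S=\sigma(\mathbf{e})$; set $\hat{\mathbf{e}}=0$, $i=k$; while $S\ne\emptyset$ and $i>0$, run the reduction procedure on $\mathbf{T}_i$ to get $\hat{\mathbf{e}}_i$, set $\hat{\mathbf{e}}\gets\hat{\mathbf{e}}+\hat{\mathbf{e}}_i$, $S\gets S\triangle\sigma(\hat{\mathbf{e}}_i)$, $i\gets i-1$; output $\hat{\mathbf{e}}$. *)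

theory Defs
  imports Complex_Main
begin

(* Vertices of T_k: pairs (x,y) with 0 <= x,y < 2^k, arithmetic mod 2^k. *)
type_synonym vtx = "nat \<times> nat"
(* Edges of T_k: (v, True) is the horizontal edge from v to v+(1,0);
   (v, False) is the vertical edge from v to v+(0,1).  This gives the
   Cayley (multi)graph with generators (+-1,0),(0,+-1): |E_k| = 2*4^k. *)
type_synonym edge = "vtx \<times> bool"

definition side :: "nat \<Rightarrow> nat" where "side k = 2 ^ k"

definition verts :: "nat \<Rightarrow> vtx set" where
  "verts k = {0..<side k} \<times> {0..<side k}"

definition edges :: "nat \<Rightarrow> edge set" where
  "edges k = verts k \<times> UNIV"

definition ends :: "nat \<Rightarrow> edge \<Rightarrow> vtx set" where
  "ends k ed = (case ed of
      ((x,y),True) \<Rightarrow> {(x,y), ((x+1) mod side k, y)}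
    | ((x,y),False) \<Rightarrow> {(x,y), (x, (y+1) mod side k)})"

definition sigma :: "nat \<Rightarrow> edge set \<Rightarrow> vtx set" where
  "sigma k e = {v \<in> verts k. odd (card {ed \<in> e. v \<in> ends k ed})}"

(* addition in F_2^E *)
definition symd :: "'a set \<Rightarrow> 'a set \<Rightarrow> 'a set" where
  "symd A B = (A - B) \<union> (B - A)"

(* F_2-sum of the family P over X *)
definition xsum :: "vtx set \<Rightarrow> (vtx \<Rightarrow> edge set) \<Rightarrow> edge set" where
  "xsum X P = {ed. odd (card {v \<in> X. ed \<in> P v})}"

definition hgt :: "nat \<Rightarrow> nat \<Rightarrow> nat" where "hgt k i = 2 ^ (k - i)"

definition hpath :: "nat \<Rightarrow> nat \<Rightarrow> vtx \<Rightarrow> edge set" where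
  "hpath k h v = {(((fst v + j) mod side k, snd v), True) | j. j < h}"
definition vpath :: "nat \<Rightarrow> nat \<Rightarrow> vtx \<Rightarrow> edge set" where
  "vpath k h v = {((fst v, (snd v + j) mod side k), False) | j. j < h}"

definition mvr :: "nat \<Rightarrow> nat \<Rightarrow> vtx \<Rightarrow> vtx" where
  "mvr k h v = ((fst v + h) mod side k, snd v)"
definition mvd :: "nat \<Rightarrow> nat \<Rightarrow> vtx \<Rightarrow> vtx" where
  "mvd k h v = (fst v, (snd v + side k - h) mod side k)"

definition lattice :: "nat \<Rightarrow> nat \<Rightarrow> vtx set" where
  "lattice k i = {v \<in> verts k. hgt k i dvd fst v \<and> hgt k i dvd snd v}"

(* cells of T_i, identified with their corner alpha = (x,y);
   cells k i rt bt: rt = right column of its block, bt = bottom row of its block.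
   A = cells False False, B = cells True False, C = cells False True, D = cells True True *)
definition cells :: "nat \<Rightarrow> nat \<Rightarrow> bool \<Rightarrow> bool \<Rightarrow> vtx set" where
  "cells k i rt bt = {v \<in> lattice k i.
      (\<not> 2 * hgt k i dvd fst v) = rt \<and> (\<not> 2 * hgt k i dvd snd v) = bt}"

(* corners of the cell with top-left corner v, at level i *)
definition cb :: "nat \<Rightarrow> nat \<Rightarrow> vtx \<Rightarrow> vtx" where "cb k i v = mvr k (hgt k i) v"
definition cg :: "nat \<Rightarrow> nat \<Rightarrow> vtx \<Rightarrow> vtx" where "cg k i v = mvd k (hgt k i) v"
definition cd :: "nat \<Rightarrow> nat \<Rightarrow> vtx \<Rightarrow> vtx" where "cd k i v = mvr k (hgt k i) (mvd k (hgt k i) v)"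
(* sides t = alpha beta, b = gamma delta, l = alpha gamma, r = beta delta *)
definition tE :: "nat \<Rightarrow> nat \<Rightarrow> vtx \<Rightarrow> edge set" where "tE k i v = hpath k (hgt k i) v"
definition bE :: "nat \<Rightarrow> nat \<Rightarrow> vtx \<Rightarrow> edge set" where "bE k i v = hpath k (hgt k i) (cg k i v)"
definition lE :: "nat \<Rightarrow> nat \<Rightarrow> vtx \<Rightarrow> edge set" where "lE k i v = vpath k (hgt k i) (cg k i v)"
definition rE :: "nat \<Rightarrow> nat \<Rightarrow> vtx \<Rightarrow> edge set" where "rE k i v = vpath k (hgt k i) (cd k i v)"

definition F1a where "F1a k i S = {v \<in> cells k i True True. v \<in> S \<and> cd k i v \<in> S}"
definition F1b where "F1b k i S = {v \<in> cells k i True True. cb k i v \<in> S \<and> cg k i v \<in> S}"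
definition step1_flip :: "nat \<Rightarrow> nat \<Rightarrow> vtx set \<Rightarrow> edge set" where
  "step1_flip k i S = symd (symd (xsum (F1a k i S) (lE k i)) (xsum (F1a k i S) (bE k i)))
                           (symd (xsum (F1b k i S) (bE k i)) (xsum (F1b k i S) (rE k i)))"
definition step1_rest :: "nat \<Rightarrow> nat \<Rightarrow> vtx set \<Rightarrow> vtx set" where
  "step1_rest k i S = S - (\<Union>v\<in>F1a k i S. {v, cd k i v}) - (\<Union>v\<in>F1b k i S. {cb k i v, cg k i v})"

definition F2a where "F2a k i S = {v \<in> cells k i False True. v \<in> S \<and> cg k i v \<in> S}"
definition F2b where "F2b k i S = {v \<in> cells k i False True. cb k i v \<in> S \<and> cd k i v \<in> S}"
definition F2c where "F2c k i S = {v \<in> cells k i True False. v \<in> S \<and> cb k i v \<in> S}"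
definition F2d where "F2d k i S = {v \<in> cells k i True False. cg k i v \<in> S \<and> cd k i v \<in> S}"
definition step2_flip :: "nat \<Rightarrow> nat \<Rightarrow> vtx set \<Rightarrow> edge set" where
  "step2_flip k i S = symd (symd (xsum (F2a k i S) (lE k i)) (xsum (F2b k i S) (rE k i)))
                           (symd (xsum (F2c k i S) (tE k i)) (xsum (F2d k i S) (bE k i)))"
definition step2_rest :: "nat \<Rightarrow> nat \<Rightarrow> vtx set \<Rightarrow> vtx set" where
  "step2_rest k i S = S - (\<Union>v\<in>F2a k i S. {v, cg k i v}) - (\<Union>v\<in>F2b k i S. {cb k i v, cd k i v})
                        - (\<Union>v\<in>F2c k i S. {v, cb k i v}) - (\<Union>v\<in>F2d k i S. {cg k i v, cd k i v})"

definition F3a where "F3a k i S = {v \<in> cells k i False False. cb k i v \<in> S}"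
definition F3b where "F3b k i S = {v \<in> cells k i False False. cg k i v \<in> S}"
definition F3c where "F3c k i S = {v \<in> cells k i False False. cd k i v \<in> S}"
definition step3_flip :: "nat \<Rightarrow> nat \<Rightarrow> vtx set \<Rightarrow> edge set" where
  "step3_flip k i S = symd (symd (xsum (F3a k i S) (tE k i)) (xsum (F3b k i S) (lE k i)))
                           (symd (xsum (F3c k i S) (lE k i)) (xsum (F3c k i S) (bE k i)))"

definition reduce :: "nat \<Rightarrow> nat \<Rightarrow> vtx set \<Rightarrow> edge set" where
  "reduce k i S = (let S1 = step1_rest k i S; S2 = step2_rest k i S1 in
      symd (step1_flip k i S) (symd (step2_flip k i S1) (step3_flip k i S2)))"

fun decode_from :: "nat \<Rightarrow> nat \<Rightarrow> vtx set \<Rightarrow> edge set" where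
  "decode_from k 0 S = {}"
| "decode_from k (Suc j) S = (if S = {} then {} else
     (let ei = reduce k (Suc j) S in symd ei (decode_from k j (symd S (sigma k ei)))))"

definition decoder :: "nat \<Rightarrow> edge set \<Rightarrow> edge set" where
  "decoder k e = decode_from k k (sigma k e)"

section \<open>Cost model: synchronous bounded fan-in machine (CREW PRAM on bits)\<close>

(* An elementary operation writes register tgt with f applied to the values
   of the source registers.  A round is a list of operations executed
   simultaneously (all read the state before the round; distinct targets). *)
type_synonym bop = "nat \<times> (bool list \<Rightarrow> bool) \<times> nat list"
type_synonym bround = "bop list"
type_synonym bprog = "bround list"

definition exec_round :: "bround \<Rightarrow> (nat \<Rightarrow> bool) \<Rightarrow> (nat \<Rightarrow> bool)" where
  "exec_round R s = (\<lambda>r. case find (\<lambda>q. fst q = r) R of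
      None \<Rightarrow> s r
    | Some (_, f, src) \<Rightarrow> f (map s src))"

definition exec :: "bprog \<Rightarrow> (nat \<Rightarrow> bool) \<Rightarrow> (nat \<Rightarrow> bool)" where
  "exec P s = fold exec_round P s"

definition well_formed :: "nat \<Rightarrow> bprog \<Rightarrow> bool" where
  "well_formed d P = (\<forall>R \<in> set P. distinct (map fst R) \<and>
      (\<forall>q \<in> set R. length (snd (snd q)) \<le> d))"

definition work :: "bprog \<Rightarrow> nat" where "work P = sum_list (map length P)"
definition depth :: "bprog \<Rightarrow> nat" where "depth P = length P"

end

theory Submission
  imports Defs "HOL-Library.Countable"
begin

(*
  Level i of the decoder is local on the coarse lattice T_i.  The selections of the
  reduction procedure in a cell read only the four corners of that cell, and a cell's
  removals and flips touch only its corners and sides, so whether an edge of T_k is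
  flipped at level i depends only on the syndrome in the 13 x 13 window of T_i-vertices
  around the start of the T_i-side containing it, and the new syndrome at a vertex on
  four such windows.  Hence each level is a single synchronous round of gates of
  bounded fan-in, one per vertex and one per edge of T_k, and the k levels give
  depth k <= log2 n and work 3 k 4^k <= n log2 n for n = 2 * 4^k.
*)

section \<open>Translations and windows on the coarse lattices\<close>

lemma side_pos: "0 < side k"
  by (simp add: side_def)

lemma hgt_pos: "0 < hgt k i"
  by (simp add: hgt_def)

lemma hgt_dvd_side: "hgt k i dvd side k"
  by (simp add: hgt_def side_def le_imp_power_dvd)

lemma hgt_le_side: "hgt k i \<le> side k"
  using hgt_dvd_side side_pos by (rule dvd_imp_le)

definition lattice_shift :: "nat \<Rightarrow> nat \<Rightarrow> int \<Rightarrow> int \<Rightarrow> vtx \<Rightarrow> vtx" where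
  "lattice_shift k i a b w =
     (nat ((int (fst w) + a * int (hgt k i)) mod int (side k)),
      nat ((int (snd w) + b * int (hgt k i)) mod int (side k)))"

lemma lattice_shift_in_verts: "lattice_shift k i a b w \<in> verts k"
  using side_pos[of k] by (auto simp: lattice_shift_def verts_def nat_less_iff)

lemma lattice_shift_shift:
  "lattice_shift k i c d (lattice_shift k i a b w) = lattice_shift k i (a + c) (b + d) w"
proof -
  have "0 < int (side k)" using side_pos by simp
  then have nat_mod: "int (nat (x mod int (side k))) = x mod int (side k)" for x
    by simp
  have "((x + a * h) mod int (side k) + c * h) mod int (side k)
      = (x + (a + c) * h) mod int (side k)" for x a c h :: int
    by (metis mod_add_left_eq distrib_right add.assoc)
  then show ?thesis
    unfolding lattice_shift_def fst_conv snd_conv nat_mod by simp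
qed

lemma lattice_shift_zero: "w \<in> verts k \<Longrightarrow> lattice_shift k i 0 0 w = w"
  by (cases w) (auto simp: lattice_shift_def verts_def zmod_int[symmetric])

lemma mvr_eq_lattice_shift: "w \<in> verts k \<Longrightarrow> mvr k (hgt k i) w = lattice_shift k i 1 0 w"
  by (cases w)
    (auto simp: lattice_shift_def verts_def mvr_def zmod_int[symmetric]
       of_nat_add[symmetric] simp del: of_nat_add)

lemma mvd_eq_lattice_shift: "w \<in> verts k \<Longrightarrow> mvd k (hgt k i) w = lattice_shift k i 0 (-1) w"
proof (cases w)
  case (Pair x y)
  have "int ((y + side k - hgt k i) mod side k)
      = (int y + int (side k) - int (hgt k i)) mod int (side k)"
    using hgt_le_side[of k i] by (simp add: zmod_int of_nat_diff)
  also have "\<dots> = (int y - int (hgt k i)) mod int (side k)"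
    by (metis add.commute add_diff_eq mod_add_self2)
  finally have "(y + side k - hgt k i) mod side k = nat ((int y - int (hgt k i)) mod int (side k))"
    by linarith
  moreover assume "w \<in> verts k"
  ultimately show ?thesis
    using Pair by (auto simp: lattice_shift_def verts_def mvd_def zmod_int[symmetric])
qed

lemma cb_eq_lattice_shift: "v \<in> verts k \<Longrightarrow> cb k i v = lattice_shift k i 1 0 v"
  by (simp add: cb_def mvr_eq_lattice_shift)

lemma cg_eq_lattice_shift: "v \<in> verts k \<Longrightarrow> cg k i v = lattice_shift k i 0 (-1) v"
  by (simp add: cg_def mvd_eq_lattice_shift)

lemma cd_eq_lattice_shift: "v \<in> verts k \<Longrightarrow> cd k i v = lattice_shift k i 1 (-1) v"
  by (simp add: cd_def mvd_eq_lattice_shift mvr_eq_lattice_shift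
      lattice_shift_in_verts lattice_shift_shift)

lemma lattice_shift_in_lattice:
  assumes "w \<in> lattice k i"
  shows "lattice_shift k i a b w \<in> lattice k i"
proof -
  have "hgt k i dvd nat ((int x + c * int (hgt k i)) mod int (side k))"
    if "hgt k i dvd x" for x c
  proof -
    have "int (hgt k i) dvd (int x + c * int (hgt k i)) mod int (side k)"
      using that hgt_dvd_side by (simp add: dvd_mod)
    moreover have "0 \<le> (int x + c * int (hgt k i)) mod int (side k)"
      using side_pos by simp
    ultimately show ?thesis
      by (metis int_nat_eq of_nat_dvd_iff)
  qed
  then show ?thesis
    using assms lattice_shift_in_verts by (auto simp: lattice_def lattice_shift_def)
qed

definition window :: "nat \<Rightarrow> nat \<Rightarrow> vtx \<Rightarrow> int \<Rightarrow> vtx set" where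
  "window k i w r = {lattice_shift k i a b w | a b. \<bar>a\<bar> \<le> r \<and> \<bar>b\<bar> \<le> r}"

lemma window_subset_verts: "window k i w r \<subseteq> verts k"
  unfolding window_def using lattice_shift_in_verts by blast

lemma lattice_shift_in_window:
  "\<bar>a\<bar> \<le> r \<Longrightarrow> \<bar>b\<bar> \<le> r \<Longrightarrow> lattice_shift k i a b w \<in> window k i w r"
  unfolding window_def by blast

lemma center_in_window: "w \<in> verts k \<Longrightarrow> 0 \<le> r \<Longrightarrow> w \<in> window k i w r"
  using lattice_shift_in_window[of 0 r 0 k i w] by (simp add: lattice_shift_zero)

lemma window_mono: "r \<le> s \<Longrightarrow> window k i w r \<subseteq> window k i w s"
  unfolding window_def by force

lemma window_trans:
  assumes "u \<in> window k i w r" "v \<in> window k i u s"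
  shows "v \<in> window k i w (r + s)"
proof -
  obtain a b c d where "u = lattice_shift k i a b w" "v = lattice_shift k i c d u"
    and "\<bar>a\<bar> \<le> r" "\<bar>b\<bar> \<le> r" "\<bar>c\<bar> \<le> s" "\<bar>d\<bar> \<le> s"
    using assms unfolding window_def by blast
  then show ?thesis
    using lattice_shift_in_window[of "a + c" "r + s" "b + d" k i w]
    by (simp add: lattice_shift_shift abs_triangle_ineq[THEN order_trans])
qed

lemma window_sym:
  assumes "v \<in> verts k" "\<bar>a\<bar> \<le> r" "\<bar>b\<bar> \<le> r"
  shows "v \<in> window k i (lattice_shift k i a b v) r"
  using assms lattice_shift_in_window[of "-a" r "-b" k i "lattice_shift k i a b v"]
  by (simp add: lattice_shift_shift lattice_shift_zero)

definition corners :: "nat \<Rightarrow> nat \<Rightarrow> vtx \<Rightarrow> vtx set" where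
  "corners k i v = {v, cb k i v, cg k i v, cd k i v}"

lemma corners_subset_window:
  assumes "v \<in> window k i w r"
  shows "corners k i v \<subseteq> window k i w (r + 1)"
proof -
  have "v \<in> verts k"
    using assms window_subset_verts by blast
  then have "corners k i v \<subseteq> window k i v 1"
    by (simp add: corners_def center_in_window cb_eq_lattice_shift cg_eq_lattice_shift
        cd_eq_lattice_shift lattice_shift_in_window)
  then show ?thesis
    using window_trans[OF assms] by blast
qed

lemma in_window_of_corner:
  "v \<in> verts k \<Longrightarrow> u \<in> corners k i v \<Longrightarrow> v \<in> window k i u 1"
  using window_sym[of v k 0 1 0 i] window_sym[of v k 1 1 0 i]
    window_sym[of v k 0 1 "-1" i] window_sym[of v k 1 1 "-1" i]
  by (auto simp: corners_def cb_eq_lattice_shift cg_eq_lattice_shift cd_eq_lattice_shift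
      lattice_shift_zero)

definition lattice_paths :: "nat \<Rightarrow> nat \<Rightarrow> vtx \<Rightarrow> edge set" where
  "lattice_paths k i w = hpath k (hgt k i) w \<union> vpath k (hgt k i) w"

definition edge_anchor :: "nat \<Rightarrow> nat \<Rightarrow> edge \<Rightarrow> vtx" where
  "edge_anchor k i ed =
     (fst (fst ed) div hgt k i * hgt k i, snd (fst ed) div hgt k i * hgt k i)"

lemma round_down_path_point:
  fixes x j h N :: nat
  assumes "h dvd x" "x < N" "h dvd N" "j < h"
  shows "((x + j) mod N) div h * h = x"
proof -
  obtain m M where m: "x = h * m" and M: "N = h * M"
    using assms(1,3) by blast
  then have "x + h \<le> N"
    using assms(2)
    by (metis Suc_leI mult_Suc_right add.commute mult_le_mono2 nat_mult_less_cancel_disj)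
  then have "(x + j) mod N = h * m + j"
    using m assms(4) by simp
  then show ?thesis
    using m assms(4) by simp
qed

lemma edge_anchor_of_lattice_path:
  assumes "w \<in> lattice k i" "ed \<in> lattice_paths k i w"
  shows "edge_anchor k i ed = w"
  using assms round_down_path_point[OF _ _ hgt_dvd_side, of k i] hgt_pos[of k i]
  unfolding lattice_paths_def hpath_def vpath_def lattice_def verts_def edge_anchor_def
  by (cases w) auto

lemma cell_side_is_path:
  assumes "v \<in> verts k" "P \<in> {tE k i, bE k i, lE k i, rE k i}" "ed \<in> P v"
  obtains a b
  where "\<bar>a\<bar> \<le> 1" "\<bar>b\<bar> \<le> 1" "ed \<in> lattice_paths k i (lattice_shift k i a b v)"
proof -
  have "ed \<in> lattice_paths k i (lattice_shift k i 0 0 v)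
      \<or> ed \<in> lattice_paths k i (lattice_shift k i 0 (-1) v)
      \<or> ed \<in> lattice_paths k i (lattice_shift k i 1 (-1) v)"
    using assms
    by (auto simp: tE_def bE_def lE_def rE_def lattice_paths_def lattice_shift_zero
        cg_eq_lattice_shift cd_eq_lattice_shift)
  then show ?thesis
    using that[of 0 0] that[of 0 "-1"] that[of 1 "-1"] by auto
qed

lemma cell_near_edge_anchor:
  assumes "v \<in> lattice k i" "P \<in> {tE k i, bE k i, lE k i, rE k i}" "ed \<in> P v"
  shows "v \<in> window k i (edge_anchor k i ed) 1"
proof -
  have v: "v \<in> verts k"
    using assms(1) by (simp add: lattice_def)
  obtain a b where ab: "\<bar>a\<bar> \<le> 1" "\<bar>b\<bar> \<le> 1"
    and ed: "ed \<in> lattice_paths k i (lattice_shift k i a b v)"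
    using cell_side_is_path[OF v assms(2,3)] .
  have "edge_anchor k i ed = lattice_shift k i a b v"
    using edge_anchor_of_lattice_path[OF lattice_shift_in_lattice[OF assms(1)] ed] .
  then show ?thesis
    using window_sym[OF v ab] by simp
qed

lemma cell_sides_subset_edges:
  assumes "v \<in> verts k" "P \<in> {tE k i, bE k i, lE k i, rE k i}"
  shows "P v \<subseteq> edges k"
proof
  fix ed
  assume "ed \<in> P v"
  then obtain a b where "ed \<in> lattice_paths k i (lattice_shift k i a b v)"
    using cell_side_is_path[OF assms] by blast
  then show "ed \<in> edges k"
    using lattice_shift_in_verts[of k i a b v] side_pos[of k]
    by (auto simp: lattice_paths_def hpath_def vpath_def edges_def verts_def)
qed

section \<open>Locality of one level of the decoder\<close>

lemma in_symd [simp]: "x \<in> symd A B \<longleftrightarrow> (x \<in> A) \<noteq> (x \<in> B)"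
  by (auto simp: symd_def)

lemma symd_subset: "A \<subseteq> E \<Longrightarrow> B \<subseteq> E \<Longrightarrow> symd A B \<subseteq> E"
  by (auto simp: symd_def)

lemma xsum_subset:
  assumes "\<And>v. v \<in> X \<Longrightarrow> P v \<subseteq> E"
  shows "xsum X P \<subseteq> E"
proof
  fix ed
  assume "ed \<in> xsum X P"
  then have "odd (card {v \<in> X. ed \<in> P v})"
    by (simp add: xsum_def)
  then have "{v \<in> X. ed \<in> P v} \<noteq> {}"
    by (metis card.empty even_zero)
  then show "ed \<in> E"
    using assms by blast
qed

lemma Int_eq_subset:
  assumes "A \<inter> B = A' \<inter> B" "C \<subseteq> B"
  shows "A \<inter> C = A' \<inter> C"
proof -
  have "A \<inter> C = A \<inter> B \<inter> C" "A' \<inter> C = A' \<inter> B \<inter> C"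
    using assms(2) by auto
  then show ?thesis
    using assms(1) by simp
qed

lemma selections_in_lattice:
  "F1a k i S \<subseteq> lattice k i" "F1b k i S \<subseteq> lattice k i"
  "F2a k i S \<subseteq> lattice k i" "F2b k i S \<subseteq> lattice k i"
  "F2c k i S \<subseteq> lattice k i" "F2d k i S \<subseteq> lattice k i"
  "F3a k i S \<subseteq> lattice k i" "F3b k i S \<subseteq> lattice k i" "F3c k i S \<subseteq> lattice k i"
  by (auto simp: F1a_def F1b_def F2a_def F2b_def F2c_def F2d_def F3a_def F3b_def F3c_def
      cells_def)

lemma lattice_subset_verts: "lattice k i \<subseteq> verts k"
  by (auto simp: lattice_def)

lemma corners_agree:
  assumes "S \<inter> window k i w (r + 1) = S' \<inter> window k i w (r + 1)" "v \<in> window k i w r"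
  shows "(v \<in> S \<longleftrightarrow> v \<in> S') \<and> (cb k i v \<in> S \<longleftrightarrow> cb k i v \<in> S') \<and>
    (cg k i v \<in> S \<longleftrightarrow> cg k i v \<in> S') \<and> (cd k i v \<in> S \<longleftrightarrow> cd k i v \<in> S')"
  using corners_subset_window[OF assms(2)] assms(1) unfolding corners_def by blast

lemma selections_local:
  assumes "S \<inter> window k i w (r + 1) = S' \<inter> window k i w (r + 1)"
  shows "F1a k i S \<inter> window k i w r = F1a k i S' \<inter> window k i w r"
    and "F1b k i S \<inter> window k i w r = F1b k i S' \<inter> window k i w r"
    and "F2a k i S \<inter> window k i w r = F2a k i S' \<inter> window k i w r"
    and "F2b k i S \<inter> window k i w r = F2b k i S' \<inter> window k i w r"
    and "F2c k i S \<inter> window k i w r = F2c k i S' \<inter> window k i w r"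
    and "F2d k i S \<inter> window k i w r = F2d k i S' \<inter> window k i w r"
    and "F3a k i S \<inter> window k i w r = F3a k i S' \<inter> window k i w r"
    and "F3b k i S \<inter> window k i w r = F3b k i S' \<inter> window k i w r"
    and "F3c k i S \<inter> window k i w r = F3c k i S' \<inter> window k i w r"
  unfolding F1a_def F1b_def F2a_def F2b_def F2c_def F2d_def F3a_def F3b_def F3c_def
  by (blast dest: corners_agree[OF assms])+

lemma removal_local:
  assumes "X \<inter> window k i w (r + 1) = X' \<inter> window k i w (r + 1)" "X \<union> X' \<subseteq> verts k"
    and "\<And>v. g v \<subseteq> corners k i v"
  shows "(\<Union>v\<in>X. g v) \<inter> window k i w r = (\<Union>v\<in>X'. g v) \<inter> window k i w r"
proof -
  have "v \<in> window k i w (r + 1)" if "v \<in> X \<union> X'" "u \<in> g v" "u \<in> window k i w r" for u v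
    using window_trans[OF that(3) in_window_of_corner] that assms(2,3) by blast
  then show ?thesis
    using assms(1) by blast
qed

lemma step1_rest_local:
  assumes "S \<inter> window k i w (r + 2) = S' \<inter> window k i w (r + 2)"
  shows "step1_rest k i S \<inter> window k i w r = step1_rest k i S' \<inter> window k i w r"
proof -
  have "S \<inter> window k i w (r + 1 + 1) = S' \<inter> window k i w (r + 1 + 1)"
    using assms by (simp add: add.assoc)
  note F = selections_local[OF this]
  have verts: "X \<union> X' \<subseteq> lattice k i \<Longrightarrow> X \<union> X' \<subseteq> verts k" for X X'
    using lattice_subset_verts by blast
  have "(\<Union>v\<in>F1a k i S. {v, cd k i v}) \<inter> window k i w r
      = (\<Union>v\<in>F1a k i S'. {v, cd k i v}) \<inter> window k i w r"
    by (rule removal_local[OF F(1) verts]) (auto simp: selections_in_lattice corners_def)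
  moreover have "(\<Union>v\<in>F1b k i S. {cb k i v, cg k i v}) \<inter> window k i w r
      = (\<Union>v\<in>F1b k i S'. {cb k i v, cg k i v}) \<inter> window k i w r"
    by (rule removal_local[OF F(2) verts]) (auto simp: selections_in_lattice corners_def)
  moreover have "S \<inter> window k i w r = S' \<inter> window k i w r"
    using Int_eq_subset[OF assms window_mono] by simp
  ultimately show ?thesis
    unfolding step1_rest_def Diff_Int_distrib2 by (simp only:)
qed

lemma step2_rest_local:
  assumes "S \<inter> window k i w (r + 2) = S' \<inter> window k i w (r + 2)"
  shows "step2_rest k i S \<inter> window k i w r = step2_rest k i S' \<inter> window k i w r"
proof -
  have "S \<inter> window k i w (r + 1 + 1) = S' \<inter> window k i w (r + 1 + 1)"
    using assms by (simp add: add.assoc)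
  note F = selections_local[OF this]
  have verts: "X \<union> X' \<subseteq> lattice k i \<Longrightarrow> X \<union> X' \<subseteq> verts k" for X X'
    using lattice_subset_verts by blast
  have "(\<Union>v\<in>F2a k i S. {v, cg k i v}) \<inter> window k i w r
      = (\<Union>v\<in>F2a k i S'. {v, cg k i v}) \<inter> window k i w r"
    by (rule removal_local[OF F(3) verts]) (auto simp: selections_in_lattice corners_def)
  moreover have "(\<Union>v\<in>F2b k i S. {cb k i v, cd k i v}) \<inter> window k i w r
      = (\<Union>v\<in>F2b k i S'. {cb k i v, cd k i v}) \<inter> window k i w r"
    by (rule removal_local[OF F(4) verts]) (auto simp: selections_in_lattice corners_def)
  moreover have "(\<Union>v\<in>F2c k i S. {v, cb k i v}) \<inter> window k i w r
      = (\<Union>v\<in>F2c k i S'. {v, cb k i v}) \<inter> window k i w r"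
    by (rule removal_local[OF F(5) verts]) (auto simp: selections_in_lattice corners_def)
  moreover have "(\<Union>v\<in>F2d k i S. {cg k i v, cd k i v}) \<inter> window k i w r
      = (\<Union>v\<in>F2d k i S'. {cg k i v, cd k i v}) \<inter> window k i w r"
    by (rule removal_local[OF F(6) verts]) (auto simp: selections_in_lattice corners_def)
  moreover have "S \<inter> window k i w r = S' \<inter> window k i w r"
    using Int_eq_subset[OF assms window_mono] by simp
  ultimately show ?thesis
    unfolding step2_rest_def Diff_Int_distrib2 by (simp only:)
qed

lemma xsum_local:
  assumes "X \<union> X' \<subseteq> lattice k i" "P \<in> {tE k i, bE k i, lE k i, rE k i}"
    and "X \<inter> window k i (edge_anchor k i ed) 1 =
      X' \<inter> window k i (edge_anchor k i ed) 1"
  shows "ed \<in> xsum X P \<longleftrightarrow> ed \<in> xsum X' P"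
proof -
  have "{v \<in> X. ed \<in> P v} = {v \<in> X'. ed \<in> P v}"
    using assms cell_near_edge_anchor[OF _ assms(2)] by blast
  then show ?thesis
    by (simp add: xsum_def)
qed

lemma flips_local:
  assumes "S \<inter> window k i (edge_anchor k i ed) 2 =
    S' \<inter> window k i (edge_anchor k i ed) 2"
  shows "ed \<in> step1_flip k i S \<longleftrightarrow> ed \<in> step1_flip k i S'"
    and "ed \<in> step2_flip k i S \<longleftrightarrow> ed \<in> step2_flip k i S'"
    and "ed \<in> step3_flip k i S \<longleftrightarrow> ed \<in> step3_flip k i S'"
proof -
  note F = selections_local[of S k i "edge_anchor k i ed" 1 S', simplified, OF assms]
  note local = xsum_local[OF _ _ F(1)] xsum_local[OF _ _ F(2)] xsum_local[OF _ _ F(3)]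
    xsum_local[OF _ _ F(4)] xsum_local[OF _ _ F(5)] xsum_local[OF _ _ F(6)]
    xsum_local[OF _ _ F(7)] xsum_local[OF _ _ F(8)] xsum_local[OF _ _ F(9)]
  show "ed \<in> step1_flip k i S \<longleftrightarrow> ed \<in> step1_flip k i S'"
    "ed \<in> step2_flip k i S \<longleftrightarrow> ed \<in> step2_flip k i S'"
    "ed \<in> step3_flip k i S \<longleftrightarrow> ed \<in> step3_flip k i S'"
    by (simp_all add: step1_flip_def step2_flip_def step3_flip_def local selections_in_lattice)
qed

(* Selections at a cell read its corners, and removals and flips reach only its corners
   and sides; so each removal step, and the final flips, widen the region of S that
   matters by two lattice steps, whence the radius 6. *)
lemma reduce_local:
  assumes "S \<inter> window k i (edge_anchor k i ed) 6 =
    S' \<inter> window k i (edge_anchor k i ed) 6"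
  shows "ed \<in> reduce k i S \<longleftrightarrow> ed \<in> reduce k i S'"
proof -
  let ?W = "window k i (edge_anchor k i ed)"
  have "S \<inter> ?W (4 + 2) = S' \<inter> ?W (4 + 2)"
    using assms by simp
  note rest1 = step1_rest_local[OF this]
  have "step1_rest k i S \<inter> ?W (2 + 2) = step1_rest k i S' \<inter> ?W (2 + 2)"
    using rest1 by simp
  note rest2 = step2_rest_local[OF this]
  have "S \<inter> ?W 2 = S' \<inter> ?W 2"
    using Int_eq_subset[OF assms window_mono] by simp
  note flip1 = flips_local(1)[OF this]
  have "step1_rest k i S \<inter> ?W 2 = step1_rest k i S' \<inter> ?W 2"
    using Int_eq_subset[OF rest1 window_mono] by simp
  note flip2 = flips_local(2)[OF this]
  note flip3 = flips_local(3)[OF rest2]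
  show ?thesis
    unfolding reduce_def Let_def in_symd flip1 flip2 flip3 ..
qed

lemma reduce_subset_edges: "reduce k i S \<subseteq> edges k"
proof -
  have sides: "xsum X P \<subseteq> edges k"
    if "X \<subseteq> lattice k i" "P \<in> {tE k i, bE k i, lE k i, rE k i}" for X P
    using that lattice_subset_verts by (intro xsum_subset cell_sides_subset_edges) auto
  show ?thesis
    unfolding reduce_def Let_def step1_flip_def step2_flip_def step3_flip_def
    by (intro symd_subset sides selections_in_lattice) simp_all
qed

lemma reduce_empty: "reduce k i {} = {}"
proof -
  have "F1a k i {} = {}" "F1b k i {} = {}" "F2a k i {} = {}" "F2b k i {} = {}"
    "F2c k i {} = {}" "F2d k i {} = {}" "F3a k i {} = {}" "F3b k i {} = {}" "F3c k i {} = {}"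
    by (simp_all add: F1a_def F1b_def F2a_def F2b_def F2c_def F2d_def F3a_def F3b_def F3c_def)
  then show ?thesis
    by (simp add: reduce_def step1_flip_def step2_flip_def step3_flip_def step1_rest_def
        step2_rest_def xsum_def symd_def)
qed

definition incident_edges :: "nat \<Rightarrow> vtx \<Rightarrow> edge list" where
  "incident_edges k v =
     [(v, True), (v, False),
      (((fst v + side k - 1) mod side k, snd v), True),
      ((fst v, (snd v + side k - 1) mod side k), False)]"

lemma mod_Suc_pred_mod:
  assumes "a < N"
  shows "(Suc a mod N + N - 1) mod N = a"
proof (cases "Suc a < N")
  case False
  then have "Suc a = N"
    using assms by simp
  then show ?thesis
    by simp
qed simp

lemma ends_imp_in_incident_edges:
  assumes "ed \<in> edges k" "v \<in> ends k ed"
  shows "ed \<in> set (incident_edges k v)"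
proof -
  obtain x y d where ed: "ed = ((x, y), d)"
    by (metis prod.exhaust)
  have "x < side k" "y < side k"
    using assms(1) ed by (auto simp: edges_def verts_def)
  then show ?thesis
    using assms(2) ed mod_Suc_pred_mod[of x "side k"] mod_Suc_pred_mod[of y "side k"]
    by (cases d) (auto simp: ends_def incident_edges_def)
qed

definition window_list :: "nat \<Rightarrow> nat \<Rightarrow> vtx \<Rightarrow> int \<Rightarrow> vtx list" where
  "window_list k i w r = concat (map (\<lambda>a. map (\<lambda>b. lattice_shift k i a b w) [-r..r]) [-r..r])"

lemma set_window_list: "set (window_list k i w r) = window k i w r"
  unfolding window_list_def window_def by (force simp: abs_le_iff)

lemma length_window_list: "length (window_list k i w r) = length [-r..r] ^ 2"
  by (simp add: window_list_def length_concat o_def sum_list_triv power2_eq_square)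

definition edge_window :: "nat \<Rightarrow> nat \<Rightarrow> edge \<Rightarrow> vtx list" where
  "edge_window k i ed = window_list k i (edge_anchor k i ed) 6"

lemma set_edge_window_subset_verts: "set (edge_window k i ed) \<subseteq> verts k"
  using window_subset_verts by (simp add: edge_window_def set_window_list)

definition vertex_window :: "nat \<Rightarrow> nat \<Rightarrow> vtx \<Rightarrow> vtx list" where
  "vertex_window k i v = v # concat (map (edge_window k i) (incident_edges k v))"

lemma syndrome_update_local:
  assumes v: "v \<in> verts k"
    and agree: "S \<inter> set (vertex_window k i v) = S' \<inter> set (vertex_window k i v)"
  shows "v \<in> symd S (sigma k (reduce k i S)) \<longleftrightarrow> v \<in> symd S' (sigma k (reduce k i S'))"
proof -
  have "v \<in> S \<longleftrightarrow> v \<in> S'"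
    using agree by (auto simp: vertex_window_def)
  moreover have "ed \<in> reduce k i S \<longleftrightarrow> ed \<in> reduce k i S'"
    if "ed \<in> set (incident_edges k v)" for ed
  proof (rule reduce_local)
    have "window k i (edge_anchor k i ed) 6 \<subseteq> set (vertex_window k i v)"
      using that by (auto simp: vertex_window_def edge_window_def set_window_list)
    then show "S \<inter> window k i (edge_anchor k i ed) 6 =
        S' \<inter> window k i (edge_anchor k i ed) 6"
      by (rule Int_eq_subset[OF agree])
  qed
  then have "{ed \<in> reduce k i S. v \<in> ends k ed} = {ed \<in> reduce k i S'. v \<in> ends k ed}"
    using reduce_subset_edges ends_imp_in_incident_edges by blast
  then have "v \<in> sigma k (reduce k i S) \<longleftrightarrow> v \<in> sigma k (reduce k i S')"
    by (simp add: sigma_def)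
  ultimately show ?thesis
    by simp
qed

section \<open>The decoder as a synchronous bounded fan-in circuit\<close>

lemma decode_from_Suc:
  "decode_from k (Suc j) S =
     symd (reduce k (Suc j) S) (decode_from k j (symd S (sigma k (reduce k (Suc j) S))))"
proof (cases "S = {}")
  case True
  have "decode_from k j {} = {}"
    by (cases j) auto
  moreover have "sigma k {} = {}"
    by (simp add: sigma_def)
  ultimately show ?thesis
    using True by (simp add: reduce_empty symd_def)
qed (simp add: Let_def)

lemma decode_from_subset_edges: "decode_from k j S \<subseteq> edges k"
proof (induction j arbitrary: S)
  case (Suc j)
  then show ?case
    unfolding decode_from_Suc by (intro symd_subset reduce_subset_edges)
qed simp

definition vertex_reg :: "vtx \<Rightarrow> nat" where
  "vertex_reg v = to_nat (Inl v :: vtx + edge)"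

definition edge_reg :: "edge \<Rightarrow> nat" where
  "edge_reg ed = to_nat (Inr ed :: vtx + edge)"

lemma inj_vertex_reg: "inj vertex_reg"
  by (auto simp: inj_def vertex_reg_def)

lemma inj_edge_reg: "inj edge_reg"
  by (auto simp: inj_def edge_reg_def)

lemma vertex_reg_neq_edge_reg: "vertex_reg v \<noteq> edge_reg ed"
  by (simp add: vertex_reg_def edge_reg_def)

definition set_of_bits :: "'a list \<Rightarrow> bool list \<Rightarrow> 'a set" where
  "set_of_bits L bs = {L ! j | j. j < length L \<and> bs ! j}"

lemma set_of_bits_map: "set_of_bits L (map P L) = {u \<in> set L. P u}"
  by (auto simp: set_of_bits_def in_set_conv_nth)

definition vertex_gate :: "nat \<Rightarrow> nat \<Rightarrow> vtx \<Rightarrow> bop" where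
  "vertex_gate k i v =
     (vertex_reg v,
      \<lambda>bs. let S = set_of_bits (vertex_window k i v) bs in v \<in> symd S (sigma k (reduce k i S)),
      map vertex_reg (vertex_window k i v))"

definition edge_gate :: "nat \<Rightarrow> nat \<Rightarrow> edge \<Rightarrow> bop" where
  "edge_gate k i ed =
     (edge_reg ed,
      \<lambda>bs. hd bs \<noteq> (ed \<in> reduce k i (set_of_bits (edge_window k i ed) (tl bs))),
      edge_reg ed # map vertex_reg (edge_window k i ed))"

definition vertex_list :: "nat \<Rightarrow> vtx list" where
  "vertex_list k = List.product [0..<side k] [0..<side k]"

definition edge_list :: "nat \<Rightarrow> edge list" where
  "edge_list k = List.product (vertex_list k) [True, False]"

lemma set_vertex_list: "set (vertex_list k) = verts k"
  by (auto simp: vertex_list_def verts_def)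

lemma set_edge_list: "set (edge_list k) = edges k"
  by (auto simp: edge_list_def edges_def set_vertex_list)

definition level_round :: "nat \<Rightarrow> nat \<Rightarrow> bround" where
  "level_round k i = map (vertex_gate k i) (vertex_list k) @ map (edge_gate k i) (edge_list k)"

definition decoder_prog :: "nat \<Rightarrow> bprog" where
  "decoder_prog k = map (level_round k) (rev [1..<Suc k])"

lemma exec_round_target:
  assumes "distinct (map fst R)" "(t, f, src) \<in> set R"
  shows "exec_round R s t = f (map s src)"
proof -
  have "find (\<lambda>q. fst q = t) R = Some (t, f, src)"
    using assms by (induction R) (auto simp: rev_image_eqI)
  then show ?thesis
    by (simp add: exec_round_def)
qed

lemma distinct_targets_level_round: "distinct (map fst (level_round k i))"
proof -
  have "map fst (level_round k i) = map vertex_reg (vertex_list k) @ map edge_reg (edge_list k)"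
    by (simp add: level_round_def vertex_gate_def edge_gate_def o_def)
  moreover have "distinct (vertex_list k)" "distinct (edge_list k)"
    by (simp_all add: vertex_list_def edge_list_def distinct_product)
  ultimately show ?thesis
    using inj_vertex_reg inj_edge_reg vertex_reg_neq_edge_reg
    by (auto simp: distinct_map intro: inj_on_subset[OF _ subset_UNIV])
qed

definition encodes :: "nat \<Rightarrow> (nat \<Rightarrow> bool) \<Rightarrow> vtx set \<Rightarrow> edge set \<Rightarrow> bool" where
  "encodes k s S A \<longleftrightarrow>
     (\<forall>v\<in>verts k. s (vertex_reg v) \<longleftrightarrow> v \<in> S) \<and> (\<forall>ed\<in>edges k. s (edge_reg ed) \<longleftrightarrow> ed \<in> A)"

lemma set_of_bits_read:
  assumes "encodes k s S A" "set L \<subseteq> verts k"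
  shows "set_of_bits L (map (s \<circ> vertex_reg) L) = S \<inter> set L"
  using assms set_of_bits_map[of L "s \<circ> vertex_reg"] by (auto simp: encodes_def)

lemma exec_level_round:
  assumes enc: "encodes k s S A"
  shows "encodes k (exec_round (level_round k i) s)
           (symd S (sigma k (reduce k i S))) (symd A (reduce k i S))"
  unfolding encodes_def
proof (intro conjI ballI)
  fix v
  assume v: "v \<in> verts k"
  have "set (vertex_window k i v) \<subseteq> verts k"
    using v by (auto simp: vertex_window_def dest!: set_edge_window_subset_verts[THEN subsetD])
  note read = set_of_bits_read[OF enc this]
  have "vertex_gate k i v \<in> set (level_round k i)"
    using v by (simp add: level_round_def set_vertex_list)
  then have "exec_round (level_round k i) s (vertex_reg v) \<longleftrightarrow>
      v \<in> symd (S \<inter> set (vertex_window k i v))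
              (sigma k (reduce k i (S \<inter> set (vertex_window k i v))))"
    using exec_round_target[OF distinct_targets_level_round]
    by (simp add: vertex_gate_def read Let_def)
  also have "\<dots> \<longleftrightarrow> v \<in> symd S (sigma k (reduce k i S))"
    using syndrome_update_local[OF v] by (metis Int_assoc Int_absorb)
  finally show "exec_round (level_round k i) s (vertex_reg v) \<longleftrightarrow>
      v \<in> symd S (sigma k (reduce k i S))" .
next
  fix ed
  assume ed: "ed \<in> edges k"
  note read = set_of_bits_read[OF enc set_edge_window_subset_verts]
  have "edge_gate k i ed \<in> set (level_round k i)"
    using ed by (simp add: level_round_def set_edge_list)
  then have "exec_round (level_round k i) s (edge_reg ed)
      \<longleftrightarrow> s (edge_reg ed) \<noteq> (ed \<in> reduce k i (S \<inter> set (edge_window k i ed)))"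
    using exec_round_target[OF distinct_targets_level_round] by (simp add: edge_gate_def read)
  also have "\<dots> \<longleftrightarrow> ed \<in> symd A (reduce k i S)"
    using enc ed reduce_local[of "S \<inter> set (edge_window k i ed)" k i ed S]
    by (simp add: encodes_def edge_window_def set_window_list Int_assoc)
  finally show "exec_round (level_round k i) s (edge_reg ed) \<longleftrightarrow> ed \<in> symd A (reduce k i S)" .
qed

lemma exec_level_rounds:
  assumes "encodes k s S A" "ed \<in> edges k"
  shows "exec (map (level_round k) (rev [1..<Suc j])) s (edge_reg ed) \<longleftrightarrow>
    ed \<in> symd A (decode_from k j S)"
  using assms
proof (induction j arbitrary: s S A)
  case 0
  then show ?case
    by (simp add: exec_def encodes_def)
next
  case (Suc j)
  have "exec (map (level_round k) (rev [1..<Suc (Suc j)])) s (edge_reg ed)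
      \<longleftrightarrow> exec (map (level_round k) (rev [1..<Suc j]))
            (exec_round (level_round k (Suc j)) s) (edge_reg ed)"
    by (simp add: exec_def)
  also have "\<dots> \<longleftrightarrow> ed \<in> symd (symd A (reduce k (Suc j) S))
      (decode_from k j (symd S (sigma k (reduce k (Suc j) S))))"
    by (rule Suc.IH[OF exec_level_round[OF Suc.prems(1)] Suc.prems(2)])
  also have "\<dots> \<longleftrightarrow> ed \<in> symd A (decode_from k (Suc j) S)"
    unfolding decode_from_Suc by auto
  finally show ?case .
qed

lemma decoder_prog_correct:
  "{ed \<in> edges k. exec (decoder_prog k) (\<lambda>r. \<exists>v\<in>sigma k e. vertex_reg v = r) (edge_reg ed)}
     = decoder k e"
proof -
  have "encodes k (\<lambda>r. \<exists>v\<in>sigma k e. vertex_reg v = r) (sigma k e) {}"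
    using inj_vertex_reg vertex_reg_neq_edge_reg by (auto simp: encodes_def inj_eq)
  from exec_level_rounds[OF this, of _ k]
  have "exec (decoder_prog k) (\<lambda>r. \<exists>v\<in>sigma k e. vertex_reg v = r) (edge_reg ed)
      \<longleftrightarrow> ed \<in> decoder k e" if "ed \<in> edges k" for ed
    using that unfolding decoder_prog_def decoder_def by simp
  then show ?thesis
    using decode_from_subset_edges[of k k "sigma k e"] by (auto simp: decoder_def)
qed

lemma well_formed_level_round: "well_formed 677 [level_round k i]"
proof -
  have "length (vertex_window k i v) = 677" "length (edge_window k i ed) = 169" for v ed
    by (simp_all add: vertex_window_def edge_window_def incident_edges_def length_window_list)
  then show ?thesis
    using distinct_targets_level_round
    by (auto simp: well_formed_def level_round_def vertex_gate_def edge_gate_def)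
qed

lemma well_formed_decoder_prog: "well_formed 677 (decoder_prog k)"
  using well_formed_level_round by (auto simp: well_formed_def decoder_prog_def)

lemma card_verts: "card (verts k) = 4 ^ k"
  by (simp add: verts_def side_def card_cartesian_product power_mult_distrib[symmetric])

lemma card_edges: "card (edges k) = 2 * 4 ^ k"
  by (simp add: edges_def card_cartesian_product card_verts)

lemma work_decoder_prog: "work (decoder_prog k) = 3 * k * 4 ^ k"
proof -
  have "length (level_round k i) = 3 * 4 ^ k" for i
    by (simp add: level_round_def vertex_list_def edge_list_def side_def
        power_mult_distrib[symmetric])
  then show ?thesis
    by (simp add: work_def decoder_prog_def o_def sum_list_triv)
qed

lemma depth_decoder_prog: "depth (decoder_prog k) = k"
  by (simp add: depth_def decoder_prog_def)

lemma log2_card_edges: "log 2 (real (card (edges k))) = 2 * real k + 1"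
proof -
  have "real (card (edges k)) = 2 ^ (2 * k + 1)"
    by (simp add: card_edges power_mult)
  then show ?thesis
    using log_pow_cancel[of "2::real" "2 * k + 1"] by simp
qed

theorem proposition2:
  "\<exists>(C::real) (d::nat). \<forall>k\<ge>1. \<exists>(P::bprog) (inp::vtx \<Rightarrow> nat) (outp::edge \<Rightarrow> nat).
     inj inp \<and> inj outp \<and> well_formed d P \<and>
     real (work P) \<le> C * real (card (edges k)) * log 2 (real (card (edges k))) \<and>
     real (depth P) \<le> C * log 2 (real (card (edges k))) \<and>
     (\<forall>e \<subseteq> edges k.
        {ed \<in> edges k. exec P (\<lambda>r. \<exists>v\<in>sigma k e. inp v = r) (outp ed)} = decoder k e)"
proof -
  have work: "real (work (decoder_prog k))
      \<le> 1 * real (card (edges k)) * log 2 (real (card (edges k)))" for k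
    unfolding log2_card_edges unfolding work_decoder_prog card_edges by (simp add: algebra_simps)
  have depth: "real (depth (decoder_prog k)) \<le> 1 * log 2 (real (card (edges k)))" for k
    by (simp add: depth_decoder_prog log2_card_edges)
  show ?thesis
    using inj_vertex_reg inj_edge_reg well_formed_decoder_prog work depth decoder_prog_correct
    by blast
qed

end
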